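(* Let $p$ be an odd prime, $q=p^e$, and let $n,k$ be positive integers. Then: (1) For every $y$ in a field extension of $\mathbb{F}_p$ with $y\neq \tfrac12$, $F_n(1,y(1-y))=\dfrac{y^n-(1-y)^n}{2y-1}$; moreover $F_n(1,\tfrac14)=\dfrac{n}{2^{n-1}}$ in $\mathbb{F}_p$. (2) If $\gcd(n,k)=1$, then $F_{np^k}(1,x)=\bigl(F_n(1,x)\bigr)^{p^k}(1-4x)^{\frac{p^k-1}{2}}$ as polynomials over $\mathbb{F}_p$. (3) If $n_1,n_2$ are positive integers with $n_1\equiv n_2\pmod{q^2-1}$, then $F_{n_1}(1,x_0)=F_{n_2}(1,x_0)$ for every $x_0\in\mathbb{F}_q\setminus\{\tfrac14\}$.
   Context: For an integer $n\ge 1$, the $n$-th reversed Dickson polynomial of the third kind is $F_n(a,x)=\sum_{i=0}^{\lfloor n/2\rfloor}\frac{n-2i}{n-i}\binom{n-i}{i}(-x)^i a^{n-2i}$, where each coefficient $\frac{n-2i}{n-i}\binom{n-i}{i}$ is an integer (read in the field), and $F_0(a,x)=0$. Thus $F_n(1,x)$ is a polynomial with coefficients in $\mathbb{F}_p$. *)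

theory Defs
  imports "HOL-Computational_Algebra.Polynomial" "HOL-Computational_Algebra.Primes" "HOL-Number_Theory.Cong" "HOL-Library.Cardinality"
begin

text \<open>The coefficient (n-2i)/(n-i) * C(n-i,i) is an integer; we compute it as a natural
  number by exact division and map it into the ring. For n = 0 the sum is 0.\<close>

definition rdickson3_coeff :: "nat \<Rightarrow> nat \<Rightarrow> nat" where
  "rdickson3_coeff n i = ((n - 2*i) * ((n - i) choose i)) div (n - i)"

definition rdickson3 :: "nat \<Rightarrow> 'a::comm_ring_1 \<Rightarrow> 'a \<Rightarrow> 'a" where
  "rdickson3 n a x =
     (\<Sum>i = 0..n div 2. of_nat (rdickson3_coeff n i) * (- x) ^ i * a ^ (n - 2*i))"

end

theory Submission
  imports Defs "HOL-Number_Theory.Residues"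
begin

text \<open>With \<open>x = y (1 - y)\<close>, the polynomials \<open>F\<^sub>n(1,x)\<close> satisfy
  \<open>F\<^sub>n\<^sub>+\<^sub>2 = F\<^sub>n\<^sub>+\<^sub>1 - x F\<^sub>n\<close> with \<open>F\<^sub>0 = 0\<close>, \<open>F\<^sub>1 = 1\<close>, so they are the Lucas sequence of
  \<open>T\<^sup>2 - T + x\<close>, whose roots are \<open>y\<close> and \<open>1 - y\<close>: this is the Binet formula
  \<open>(2y - 1) F\<^sub>n(1, y(1-y)) = y\<^sup>n - (1-y)\<^sup>n\<close>.
  For (2), substitute \<open>x = X(1 - X)\<close>: the Freshman's Dream turns the Binet formula for
  \<open>n p\<^sup>k\<close> into the \<open>p\<^sup>k\<close>-th power of the one for \<open>n\<close>, and \<open>1 - 4X(1-X) = (2X - 1)\<^sup>2\<close>;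
  composition with the nonconstant \<open>X(1 - X)\<close> is injective.
  For (3), the roots \<open>(1 \<plusminus> S)/2\<close> live in \<open>\<bbbF>\<^sub>q[S]/(S\<^sup>2 - D)\<close> with \<open>D = 1 - 4x\<^sub>0 \<noteq> 0\<close>,
  where Frobenius maps \<open>S\<close> to \<open>\<plusminus>S\<close>, so every element \<open>u\<close> satisfies \<open>u ^ q\<^sup>2 = u\<close>.
  For \<open>x\<^sub>0 \<noteq> 0\<close> both roots are units, so their powers, and with them \<open>F\<^sub>n(1,x\<^sub>0)\<close>,
  are periodic modulo \<open>q\<^sup>2 - 1\<close>.\<close>

lemma rdickson3_coeff_eq:
  assumes "i < n"
  shows "rdickson3_coeff n i = (n - 1 - i) choose i"
proof -
  have "(n - 2 * i) * ((n - i) choose i) = (n - i) * ((n - i - 1) choose i)"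
    using binomial_absorb_comp[of "n - i" i] by (simp add: mult_2)
  then show ?thesis
    using assms by (simp add: rdickson3_coeff_def)
qed

lemma diagonal_binomial_eq_0:
  assumes "m div 2 < i"
  shows "(m - i) choose i = 0"
  using assms by (intro binomial_eq_0) linarith

lemma rdickson3_Suc_one_eq_sum:
  assumes "m div 2 \<le> K"
  shows "rdickson3 (Suc m) 1 x = (\<Sum>i\<le>K. of_nat ((m - i) choose i) * (- x) ^ i)"
proof -
  define f where "f i = of_nat ((m - i) choose i) * (- x) ^ i" for i
  have trunc: "sum f {..L} = sum f {..m div 2}" if "m div 2 \<le> L" for L
    using that by (intro sum.mono_neutral_right) (auto simp: f_def diagonal_binomial_eq_0)
  have "rdickson3 (Suc m) 1 x = sum f {..Suc m div 2}"
    unfolding rdickson3_def atLeast0AtMost f_def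
    by (intro sum.cong refl) (simp add: rdickson3_coeff_eq)
  also have "\<dots> = sum f {..K}"
    using trunc[of "Suc m div 2"] trunc[OF assms] by simp
  finally show ?thesis
    by (simp add: f_def)
qed

lemma rdickson3_0 [simp]: "rdickson3 0 a x = 0"
  by (simp add: rdickson3_def rdickson3_coeff_def)

lemma rdickson3_one_at_0: "rdickson3 (Suc m) 1 0 = 1"
  by (simp add: rdickson3_Suc_one_eq_sum[of m "m div 2"] power_0_left if_distrib[of "\<lambda>t. _ * t"] cong: if_cong)

lemma Suc_diff_choose_Suc: "(Suc m - j) choose (Suc j) = ((m - j) choose j) + ((m - j) choose (Suc j))"
  by (cases "j \<le> m") (simp_all add: Suc_diff_le)

lemma rdickson3_rec:
  "rdickson3 (Suc (Suc n)) 1 x = rdickson3 (Suc n) 1 x - x * rdickson3 n 1 x"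
proof (cases n)
  case 0
  then show ?thesis
    using rdickson3_Suc_one_eq_sum[of 0 0 x] rdickson3_Suc_one_eq_sum[of 1 0 x] by simp
next
  case (Suc m)
  define c where "c k j = of_nat ((k - j) choose j) * (- x) ^ j" for k j
  have shift: "(\<Sum>j\<le>Suc (Suc m). c k j) = 1 + (\<Sum>j\<le>Suc m. c k (Suc j))" for k
    unfolding sum.atMost_Suc_shift[of "c k"] by (simp add: c_def)
  have pascal: "c (Suc (Suc m)) (Suc j) = c (Suc m) (Suc j) - x * c m j" for j
    by (simp add: c_def Suc_diff_choose_Suc algebra_simps)
  have "rdickson3 (Suc (Suc (Suc m))) 1 x = (\<Sum>j\<le>Suc (Suc m). c (Suc (Suc m)) j)"
    unfolding c_def by (rule rdickson3_Suc_one_eq_sum) simp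
  also have "\<dots> = (1 + (\<Sum>j\<le>Suc m. c (Suc m) (Suc j))) - x * (\<Sum>j\<le>Suc m. c m j)"
    unfolding shift pascal sum_subtractf sum_distrib_left by (rule add_diff_eq)
  also have "1 + (\<Sum>j\<le>Suc m. c (Suc m) (Suc j)) = rdickson3 (Suc (Suc m)) 1 x"
    unfolding shift[symmetric] unfolding c_def by (rule rdickson3_Suc_one_eq_sum[symmetric]) simp
  also have "(\<Sum>j\<le>Suc m. c m j) = rdickson3 (Suc m) 1 x"
    unfolding c_def by (rule rdickson3_Suc_one_eq_sum[symmetric]) simp
  finally show ?thesis
    using Suc by simp
qed

lemma rdickson3_closed_form:
  fixes y :: "'a::comm_ring_1"
  shows "(2 * y - 1) * rdickson3 n 1 (y * (1 - y)) = y ^ n - (1 - y) ^ n"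
proof (induction n rule: induct_nat_012)
  case 1
  then show ?case
    by (simp add: rdickson3_Suc_one_eq_sum[of 0 0])
next
  case (ge2 n)
  then show ?case
    by (simp add: rdickson3_rec right_diff_distrib mult.left_commute[of "2 * y - 1"])
       (simp add: algebra_simps)
qed simp

lemma four_neq_zero_if_two_neq_zero:
  assumes "(2 :: 'a::{semiring_1, semiring_no_zero_divisors}) \<noteq> 0"
  shows "(4 :: 'a) \<noteq> 0"
  using assms by (metis mult_2_right numeral_Bit0 no_zero_divisors)

lemma rdickson3_at_quarter_mult_power:
  assumes "(2 :: 'a::field) \<noteq> 0"
  shows "2 ^ n * rdickson3 n 1 (1 / 4 :: 'a) = 2 * of_nat n"
proof (induction n rule: induct_nat_012)
  case 1
  then show ?case
    by (simp add: rdickson3_Suc_one_eq_sum[of 0 0])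
next
  case (ge2 n)
  have "2 ^ Suc (Suc n) * rdickson3 (Suc (Suc n)) 1 (1 / 4 :: 'a)
      = 2 * (2 ^ Suc n * rdickson3 (Suc n) 1 (1 / 4)) - 2 ^ n * rdickson3 n 1 (1 / 4)"
    using four_neq_zero_if_two_neq_zero[OF assms] by (simp add: rdickson3_rec algebra_simps)
  also have "\<dots> = 2 * (2 * of_nat (Suc n)) - 2 * of_nat n"
    using ge2.IH by simp
  finally show ?case
    by (simp add: algebra_simps)
qed simp

lemma rdickson3_at_quarter:
  assumes "(2 :: 'a::field) \<noteq> 0" and "n \<ge> 1"
  shows "rdickson3 n 1 (1 / 4 :: 'a) = of_nat n / 2 ^ (n - 1)"
proof -
  obtain m where n: "n = Suc m"
    using assms(2) by (cases n) auto
  then have "2 * (2 ^ m * rdickson3 n 1 (1 / 4 :: 'a)) = 2 * of_nat n"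
    using rdickson3_at_quarter_mult_power[OF assms(1), of n] by (simp add: mult.assoc)
  then have "2 ^ m * rdickson3 n 1 (1 / 4 :: 'a) = of_nat n"
    by (rule iffD1[OF mult_left_cancel[OF assms(1)]])
  then show ?thesis
    using assms(1) n by (simp add: eq_divide_eq mult.commute del: of_nat_Suc)
qed

lemma rdickson3_eq_divide:
  fixes y :: "'a::field"
  assumes "(2 :: 'a) \<noteq> 0" and "y \<noteq> 1/2"
  shows "rdickson3 n 1 (y * (1 - y)) = (y ^ n - (1 - y) ^ n) / (2 * y - 1)"
proof -
  have "2 * y - 1 \<noteq> 0"
    using assms by (auto simp: field_simps)
  then show ?thesis
    unfolding rdickson3_closed_form[symmetric] by simp
qed

lemma two_neq_zero_if_CHAR_neq_2:
  assumes "CHAR('a::{semiring_1, zero_neq_one}) \<noteq> 2"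
  shows "(2 :: 'a) \<noteq> 0"
proof
  assume "(2 :: 'a) = 0"
  then have dvd: "CHAR('a) dvd 2"
    by (metis of_nat_eq_0_iff_char_dvd of_nat_numeral)
  then have "CHAR('a) \<le> 2"
    by (rule dvd_imp_le) simp
  moreover have "CHAR('a) \<noteq> 0"
    using dvd by (intro notI) simp
  ultimately
  show False using assms CHAR_not_1
    by (simp add: le_Suc_eq numeral_2_eq_2)
qed

lemma freshmans_dream_diff:
  fixes x y :: "'a::comm_ring_1"
  assumes "prime CHAR('a)" and "m = CHAR('a) ^ k"
  shows "(x - y) ^ m = x ^ m - y ^ m"
proof -
  have "x ^ m = (x - y + y) ^ m"
    by simp
  also have "\<dots> = (x - y) ^ m + y ^ m"
    by (rule freshmans_dream'[OF assms])
  finally show ?thesis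
    by simp
qed

lemma pcompose_power_left: "pcompose (p ^ n) q = pcompose p q ^ n"
  by (induction n) (simp_all add: pcompose_mult pcompose_1)

lemma pcompose_rdickson3: "pcompose (rdickson3 n 1 [:0, 1:]) q = rdickson3 n 1 (q :: 'a::comm_ring_1 poly)"
  by (simp add: rdickson3_def pcompose_sum pcompose_mult pcompose_power_left pcompose_uminus
      pcompose_smult of_nat_poly pcompose_pCons)

lemma rdickson3_mult_CHAR_power:
  fixes X :: "'a::idom poly" and k :: nat
  defines "X \<equiv> [:0, 1:]" and "P \<equiv> CHAR('a) ^ k"
  assumes "prime CHAR('a)" and "CHAR('a) \<noteq> 2"
  shows "rdickson3 (n * P) 1 X = rdickson3 n 1 X ^ P * [:1, -4:] ^ ((P - 1) div 2)"
proof -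
  define Z where "Z = X * (1 - X)"
  define a where "a = (P - 1) div 2"
  have "odd P"
    using assms(3,4) prime_ge_2_nat[OF assms(3)] prime_odd_nat[OF assms(3)]
    unfolding P_def by (simp add: even_power)
  then have P: "P = Suc (2 * a)"
    unfolding a_def by presburger
  have char_poly: "prime CHAR('a poly)"
    using assms(3) by simp
  have disc: "pcompose [:1, -4:] Z = (2 * X - 1) ^ 2"
    unfolding Z_def X_def
    by (simp add: pcompose_pCons algebra_simps power2_eq_square numeral_poly one_pCons)
  have "2 * X - 1 \<noteq> 0"
  proof
    assume "2 * X - 1 = 0"
    then have "Polynomial.coeff (2 * X - 1) 1 = 0"
      by simp
    then show False
      using two_neq_zero_if_CHAR_neq_2[OF assms(4)] unfolding X_def by (simp add: numeral_poly)
  qed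
  have comp: "pcompose (rdickson3 m 1 X) Z = rdickson3 m 1 Z" for m
    unfolding X_def by (rule pcompose_rdickson3)
  have "(2 * X - 1) * rdickson3 (n * P) 1 Z = (X ^ n) ^ P - ((1 - X) ^ n) ^ P"
    unfolding Z_def rdickson3_closed_form by (simp only: power_mult)
  also have "\<dots> = ((2 * X - 1) * rdickson3 n 1 Z) ^ P"
    unfolding Z_def rdickson3_closed_form P_def
    by (rule freshmans_dream_diff[OF char_poly, symmetric]) simp
  also have "\<dots> = (2 * X - 1) * (rdickson3 n 1 Z ^ P * ((2 * X - 1) ^ 2) ^ a)"
    unfolding power_mult_distrib P power_Suc power_mult[symmetric] by (simp only: mult_ac)
  also have "\<dots> = (2 * X - 1) * pcompose (rdickson3 n 1 X ^ P * [:1, -4:] ^ a) Z"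
    by (simp only: pcompose_mult pcompose_power_left comp disc)
  finally have "pcompose (rdickson3 (n * P) 1 X - rdickson3 n 1 X ^ P * [:1, -4:] ^ a) Z = 0"
    using \<open>2 * X - 1 \<noteq> 0\<close> by (simp add: pcompose_diff comp)
  moreover have "degree Z > 0"
    unfolding Z_def X_def by (simp add: one_pCons)
  ultimately show ?thesis
    unfolding a_def by (simp add: pcompose_eq_0_iff)
qed

lemma CHAR_eq_if_card_eq_prime_power:
  assumes "prime p" and "e \<ge> 1" and "CARD('a::{field, finite}) = p ^ e"
  shows "CHAR('a) = p"
proof -
  have "prime CHAR('a)"
    by (intro prime_CHAR_semidom finite_imp_CHAR_pos) simp
  moreover have "CHAR('a) dvd p ^ e"
    using CHAR_dvd_CARD[where 'a = 'a] assms(3) by simp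
  ultimately show ?thesis
    using assms(1) by (meson prime_dvd_power primes_dvd_imp_eq)
qed

lemma power_card_eq_self:
  fixes x :: "'a::{field, finite}"
  shows "x ^ CARD('a) = x"
proof (cases "x = 0")
  case False
  let ?U = "UNIV - {0 :: 'a}"
  have "bij_betw ((*) x) ?U ?U"
    using False by (intro bij_betwI[of _ _ _ "\<lambda>y. y / x"]) auto
  then have "(\<Prod>y\<in>?U. x * y) = \<Prod>?U"
    using prod.reindex_bij_betw[of "(*) x" ?U ?U "\<lambda>y. y"] by simp
  also have "(\<Prod>y\<in>?U. x * y) = x ^ card ?U * \<Prod>?U"
    by (simp add: prod.distrib)
  finally have "x ^ card ?U = 1"
    by simp
  then have "x ^ (CARD('a) - 1) = 1"
    by (simp add: card_Diff_singleton)
  moreover have "CARD('a) = Suc (CARD('a) - 1)"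
    using finite_UNIV_card_ge_0[where 'a = 'a] by simp
  ultimately show ?thesis
    by (metis power_Suc mult_1_right)
qed (simp add: power_0_left)

lemma cong_power_mod_period:
  assumes "[u ^ K = 1] (mod M)"
  shows "[u ^ N = u ^ (N mod K)] (mod M)"
proof -
  have "u ^ N = u ^ (N mod K) * (u ^ K) ^ (N div K)"
    by (metis mod_div_mult_eq mult.commute power_add power_mult)
  also have "[\<dots> = u ^ (N mod K) * 1 ^ (N div K)] (mod M)"
    by (intro cong_mult cong_refl cong_pow assms)
  finally show ?thesis
    by simp
qed

lemma cong_power_eq_one_if_unit:
  assumes "[u * w = 1] (mod M)" and "[u ^ Suc K = u] (mod M)"
  shows "[u ^ K = 1] (mod M)"
proof -
  have "[u ^ K = u ^ K * (u * w)] (mod M)"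
    using cong_mult[OF cong_refl assms(1), of "u ^ K"] by (simp add: cong_sym)
  also have "u ^ K * (u * w) = u ^ Suc K * w"
    by (simp add: mult_ac)
  also have "[\<dots> = u * w] (mod M)"
    by (intro cong_mult assms(2) cong_refl)
  finally show ?thesis
    using assms(1) by (rule cong_trans)
qed

lemma rdickson3_cong:
  fixes a b :: "'a::unique_euclidean_ring"
  assumes "[a = b] (mod M)"
  shows "[rdickson3 n c a = rdickson3 n c b] (mod M)"
  unfolding rdickson3_def by (intro cong_sum cong_mult cong_refl cong_pow cong_uminus assms)

lemma rdickson3_const_poly: "rdickson3 n 1 [:x:] = [:rdickson3 n 1 x:]"
  by (simp add: rdickson3_def poly_const_pow of_nat_poly mult_to_poly mult_ac flip: sum_to_poly pCons_one)

lemma linear_poly_power_card_square_cong: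
  fixes a b D :: "'a::{field, finite}"
  assumes "CARD('a) = CHAR('a) ^ e" and "CHAR('a) \<noteq> 2" and "D \<noteq> 0"
  shows "[[:a, b:] ^ (CARD('a)\<^sup>2) = [:a, b:]] (mod [:-D, 0, 1:])"
proof -
  define q where "q = CARD('a)"
  define M where "M = [:-D, 0, 1:]"
  define r where "r = (q - 1) div 2"
  have prime: "prime CHAR('a)"
    by (intro prime_CHAR_semidom finite_imp_CHAR_pos) simp
  have "odd q"
    using assms(1,2) prime_ge_2_nat[OF prime] prime_odd_nat[OF prime]
    unfolding q_def by (simp add: even_power)
  then have q: "q = Suc (2 * r)"
    unfolding r_def by presburger
  define \<epsilon> where "\<epsilon> = D ^ r"
  \<comment> \<open>the quadratic character of \<open>D\<close>; Frobenius maps \<open>[:0, 1:]\<close> to \<open>\<epsilon> [:0, 1:]\<close>\<close>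
  have "D * (\<epsilon> * \<epsilon>) = D ^ q"
    unfolding \<epsilon>_def q by (simp add: power_add[symmetric] mult_2)
  also have "\<dots> = D"
    unfolding q_def by (rule power_card_eq_self)
  finally have \<epsilon>: "\<epsilon> * \<epsilon> = 1"
    using assms(3) by simp
  have X2: "[[:0, 1:] ^ 2 = [:D:]] (mod M)"
    unfolding M_def by (simp add: cong_iff_dvd_diff power2_eq_square)
  have frobenius: "[[:c, d:] ^ q = [:c, d * \<epsilon>:]] (mod M)" for c d
  proof -
    have "[:c, d:] ^ q = ([:c:] + [:d:] * [:0, 1:]) ^ q"
      by simp
    also have "\<dots> = [:c:] ^ q + ([:d:] * [:0, 1:]) ^ q"
      by (rule freshmans_dream') (use prime assms(1) in \<open>simp_all add: q_def\<close>)
    also have "\<dots> = [:c:] + [:d:] * ([:0, 1:] * ([:0, 1:] ^ 2) ^ r)"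
      unfolding power_mult_distrib poly_const_pow q_def power_card_eq_self
      unfolding q[unfolded q_def] power_Suc power_mult ..
    also have "[\<dots> = [:c:] + [:d:] * ([:0, 1:] * [:D:] ^ r)] (mod M)"
      by (intro cong_add cong_mult cong_refl cong_pow X2)
    also have "[:c:] + [:d:] * ([:0, 1:] * [:D:] ^ r) = [:c, d * \<epsilon>:]"
      unfolding \<epsilon>_def by (simp add: poly_const_pow)
    finally show ?thesis .
  qed
  have "[:a, b:] ^ (q\<^sup>2) = ([:a, b:] ^ q) ^ q"
    by (simp add: power2_eq_square power_mult)
  also have "[\<dots> = [:a, b * \<epsilon>:] ^ q] (mod M)"
    by (intro cong_pow frobenius)
  also have "[[:a, b * \<epsilon>:] ^ q = [:a, b * \<epsilon> * \<epsilon>:]] (mod M)"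
    by (rule frobenius)
  also have "[:a, b * \<epsilon> * \<epsilon>:] = [:a, b:]"
    using \<epsilon> by (simp add: mult.assoc)
  finally show ?thesis
    unfolding q_def M_def .
qed

lemma half_roots_product_cong:
  fixes x :: "'a::field"
  assumes "(2 :: 'a) \<noteq> 0"
  shows "[[:1/2, 1/2:] * [:1/2, -1/2:] = [:x:]] (mod [:-(1 - 4 * x), 0, 1:])"
proof -
  have "[:1/2, 1/2:] * [:1/2, -1/2:] - [:x:] = [:-1/4:] * [:-(1 - 4 * x), 0, 1:]"
    using four_neq_zero_if_two_neq_zero[OF assms] by (simp add: field_simps)
  then show ?thesis
    unfolding cong_iff_dvd_diff by (metis dvd_triv_right)
qed

text \<open>Modulo \<open>S\<^sup>2 - (1 - 4x)\<close>, \<open>S = [:0, 1:]\<close> is a square root of the discriminant, and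
  \<open>[:1/2, \<plusminus>1/2:] = (1 \<plusminus> S)/2\<close> are the two roots of \<open>T\<^sup>2 - T + x\<close>.\<close>

lemma rdickson3_binet_cong:
  fixes x :: "'a::field"
  assumes "(2 :: 'a) \<noteq> 0"
  shows "[[:0, 1:] * [:rdickson3 n 1 x:] = [:1/2, 1/2:] ^ n - [:1/2, -1/2:] ^ n]
           (mod [:-(1 - 4 * x), 0, 1:])"
proof -
  define y where "y = [:1/2, 1/2 :: 'a:]"
  have X: "2 * y - 1 = [:0, 1:]" and z: "1 - y = [:1/2, -1/2:]"
    using assms unfolding y_def by (simp_all add: numeral_poly one_pCons)
  have "[[:rdickson3 n 1 x:] = rdickson3 n 1 (y * (1 - y))] (mod [:-(1 - 4 * x), 0, 1:])"
    unfolding rdickson3_const_poly[symmetric] z unfolding y_def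
    by (intro rdickson3_cong cong_sym[OF half_roots_product_cong[OF assms]])
  then have "[[:0, 1:] * [:rdickson3 n 1 x:] = (2 * y - 1) * rdickson3 n 1 (y * (1 - y))]
      (mod [:-(1 - 4 * x), 0, 1:])"
    unfolding X by (rule cong_scalar_left)
  then show ?thesis
    unfolding rdickson3_closed_form unfolding z unfolding y_def .
qed

lemma rdickson3_periodic:
  fixes x :: "'a::{field, finite}"
  assumes "CARD('a) = CHAR('a) ^ e" and "CHAR('a) \<noteq> 2" and "x \<noteq> 1/4"
    and "n1 \<ge> 1" and "n2 \<ge> 1" and "[n1 = n2] (mod (CARD('a)\<^sup>2 - 1))"
  shows "rdickson3 n1 1 x = rdickson3 n2 1 x"
proof (cases "x = 0")
  case True
  obtain m1 m2 where "n1 = Suc m1" and "n2 = Suc m2"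
    using assms(4,5) by (cases n1; cases n2) auto
  then show ?thesis
    using True by (simp add: rdickson3_one_at_0)
next
  case False
  define M where "M = [:-(1 - 4 * x), 0, 1:]"
  define K where "K = CARD('a)\<^sup>2 - 1"
  define y where "y = [:1/2, 1/2 :: 'a:]"
  define z where "z = [:1/2, -1/2 :: 'a:]"
  have two: "(2 :: 'a) \<noteq> 0"
    using assms(2) by (rule two_neq_zero_if_CHAR_neq_2)
  have D: "1 - 4 * x \<noteq> 0"
    using assms(3) four_neq_zero_if_two_neq_zero[OF two] by (auto simp: field_simps)
  have "Suc K = CARD('a)\<^sup>2"
    unfolding K_def using finite_UNIV_card_ge_0[where 'a = 'a] by simp
  then have Suc_K: "[u ^ Suc K = u] (mod M)" if "u \<in> {y, z}" for u
    using that unfolding M_def y_def z_def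
    by (auto simp only: insert_iff empty_iff
        intro: linear_poly_power_card_square_cong[OF assms(1,2) D])
  have "[y * z = [:x:]] (mod M)"
    unfolding M_def y_def z_def using two by (rule half_roots_product_cong)
  then have inv: "[y * (z * [:1/x:]) = 1] (mod M)" "[z * (y * [:1/x:]) = 1] (mod M)"
    using cong_scalar_right[of "y * z" "[:x:]" M "[:1/x:]"] False
    by (simp_all add: mult_ac mult_to_poly one_pCons)
  have "[y ^ K = 1] (mod M)" "[z ^ K = 1] (mod M)"
    using cong_power_eq_one_if_unit[OF inv(1) Suc_K] cong_power_eq_one_if_unit[OF inv(2) Suc_K]
    by simp_all
  note period = this[THEN cong_power_mod_period]
  have binet: "[[:0, 1:] * [:rdickson3 n 1 x:] = y ^ (n mod K) - z ^ (n mod K)] (mod M)" for n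
  proof -
    have "[[:0, 1:] * [:rdickson3 n 1 x:] = y ^ n - z ^ n] (mod M)"
      unfolding M_def y_def z_def by (rule rdickson3_binet_cong[OF two])
    also have "[y ^ n - z ^ n = y ^ (n mod K) - z ^ (n mod K)] (mod M)"
      by (intro cong_diff period)
    finally show ?thesis .
  qed
  have "n1 mod K = n2 mod K"
    using assms(6) unfolding K_def cong_def .
  then have "[[:0, 1:] * [:rdickson3 n1 1 x:] = [:0, 1:] * [:rdickson3 n2 1 x:]] (mod M)"
    using binet[of n1] binet[of n2] by (metis cong_sym cong_trans)
  then have "M dvd [:0, rdickson3 n1 1 x - rdickson3 n2 1 x:]"
    by (simp add: cong_iff_dvd_diff)
  then have "degree M \<le> degree [:0, rdickson3 n1 1 x - rdickson3 n2 1 x:]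
      \<or> rdickson3 n1 1 x - rdickson3 n2 1 x = 0"
    using dvd_imp_degree_le by fastforce
  then show ?thesis
    unfolding M_def by (auto split: if_splits)
qed

theorem theorem2p3:
  fixes p e n k :: nat
  assumes "prime p" and "odd p" and "e \<ge> 1" and "n \<ge> 1" and "k \<ge> 1"
  shows
    "(\<forall>y :: 'a :: field. CHAR('a) = p \<longrightarrow> y \<noteq> 1/2 \<longrightarrow>
        rdickson3 n 1 (y * (1 - y)) = (y ^ n - (1 - y) ^ n) / (2 * y - 1))
     \<and> (CHAR('a) = p \<longrightarrow> rdickson3 n (1 :: 'a) (1/4) = of_nat n / 2 ^ (n - 1))
     \<and> ((CARD('b) = p \<and> coprime n k) \<longrightarrow>
        rdickson3 (n * p ^ k) 1 ([:0, 1:] :: 'b :: {field, finite} poly)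
          = (rdickson3 n 1 [:0, 1:]) ^ (p ^ k) * [:1, -4:] ^ ((p ^ k - 1) div 2))
     \<and> (\<forall>n1 n2 (x0 :: 'c :: {field, finite}). CARD('c) = p ^ e \<longrightarrow>
        n1 \<ge> 1 \<longrightarrow> n2 \<ge> 1 \<longrightarrow> [n1 = n2] (mod ((p ^ e)\<^sup>2 - 1)) \<longrightarrow>
        x0 \<noteq> 1/4 \<longrightarrow> rdickson3 n1 1 x0 = rdickson3 n2 1 x0)"
proof (intro conjI allI impI)
  fix y :: 'a
  assume "CHAR('a) = p" and "y \<noteq> 1/2"
  with assms(2) show "rdickson3 n 1 (y * (1 - y)) = (y ^ n - (1 - y) ^ n) / (2 * y - 1)"
    by (intro rdickson3_eq_divide two_neq_zero_if_CHAR_neq_2) auto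
next
  assume "CHAR('a) = p"
  with assms(2,4) show "rdickson3 n (1 :: 'a) (1/4) = of_nat n / 2 ^ (n - 1)"
    by (intro rdickson3_at_quarter two_neq_zero_if_CHAR_neq_2) auto
next
  assume "CARD('b) = p \<and> coprime n k"
  then have "CHAR('b) = p"
    using CHAR_eq_if_card_eq_prime_power[OF assms(1), of 1, where 'a = 'b] by simp
  moreover have "p \<noteq> 2"
    using assms(2) by auto
  ultimately show "rdickson3 (n * p ^ k) 1 ([:0, 1:] :: 'b :: {field, finite} poly)
      = (rdickson3 n 1 [:0, 1:]) ^ (p ^ k) * [:1, -4:] ^ ((p ^ k - 1) div 2)"
    using rdickson3_mult_CHAR_power[where 'a = 'b and k = k and n = n] assms(1) by simp
next
  fix n1 n2 and x0 :: 'c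
  assume card: "CARD('c) = p ^ e" and "n1 \<ge> 1" and "n2 \<ge> 1"
    and cong: "[n1 = n2] (mod ((p ^ e)\<^sup>2 - 1))" and "x0 \<noteq> 1/4"
  have "CHAR('c) = p"
    using CHAR_eq_if_card_eq_prime_power[OF assms(1,3) card] .
  then have "CARD('c) = CHAR('c) ^ e" and "CHAR('c) \<noteq> 2"
    using card assms(2) by auto
  moreover have "[n1 = n2] (mod (CARD('c)\<^sup>2 - 1))"
    using cong unfolding card .
  ultimately show "rdickson3 n1 1 x0 = rdickson3 n2 1 x0"
    using rdickson3_periodic \<open>x0 \<noteq> 1/4\<close> \<open>n1 \<ge> 1\<close> \<open>n2 \<ge> 1\<close> by blast
qed

end
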